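(* Let $\alpha>0$, $\lambda=2\alpha/(\alpha+\sqrt{\alpha^2+4L\alpha})$, $y_0\in\mathrm{dom}\, h$, and run TAA: $s_0=\nabla f(y_0)$, $x_0=\mathrm{argmin}_x\{\langle s_0,x\rangle+h^\alpha(x)\}$, and for $k\ge0$: $\tilde x_{k+1}=(1-\lambda)y_k+\lambda x_k$, $s_{k+1}=(1-\lambda)s_k+\lambda\nabla f(\tilde x_{k+1})$, $x_{k+1}=\mathrm{argmin}_x\{\langle s_{k+1},x\rangle+h^\alpha(x)\}$, $y_{k+1}=(1-\lambda)y_k+\lambda x_{k+1}$. Let $\Gamma_k$ be the ACP model induced by $(y_0,\{\tilde x_{i+1}\}_{i=0}^{k-1},(\lambda,\dots,\lambda))$. Then for all $k\ge0$, $\min_{x\in\mathbb{R}^n}\Gamma_k(x)\ge\phi^\alpha(y_k)-(1-\lambda)^k\Delta$, where $\Delta=\phi^\alpha(y_0)-\Gamma_0(x_0)$.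
   Context: Let $\|\cdot\|$ be a norm on $\mathbb{R}^n$. Let $f:\mathbb{R}^n\to\mathbb{R}$ be convex, differentiable and $L$-smooth ($L>0$) with respect to $\|\cdot\|$, $h:\mathbb{R}^n\to(-\infty,\infty]$ closed proper convex with bounded domain, and $w:\mathbb{R}^n\to[0,+\infty]$ closed, $1$-strongly convex with respect to $\|\cdot\|$ on $\mathrm{dom}\, h$, with $\max_{\mathrm{dom}\, h}w<\infty$. Let $h^\alpha=h+\alpha w$, $\phi^\alpha=f+h^\alpha$, $\ell_f(x;x_0)=f(x_0)+\langle\nabla f(x_0),x-x_0\rangle$. The ACP model induced by $(y_0,\{p_i\}_{i=0}^{k-1},\zeta)$, $\zeta\in[0,1]^k$, is $\Gamma_0(x)=h^\alpha(x)+\ell_f(x;y_0)$, $\Gamma_{j+1}(x)=(1-\zeta_j)\Gamma_j(x)+\zeta_j(h^\alpha(x)+\ell_f(x;p_j))$. *)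

theory Defs
  imports "HOL-Analysis.Analysis"
begin

definition is_norm :: "('a::real_vector \<Rightarrow> real) \<Rightarrow> bool" where
  "is_norm N \<longleftrightarrow> (\<forall>x. N x = 0 \<longleftrightarrow> x = 0) \<and> (\<forall>c x. N (c *\<^sub>R x) = \<bar>c\<bar> * N x)
     \<and> (\<forall>x y. N (x + y) \<le> N x + N y)"

definition dual_norm :: "('a::real_inner \<Rightarrow> real) \<Rightarrow> 'a \<Rightarrow> real" where
  "dual_norm N s = Sup {s \<bullet> x | x. N x \<le> 1}"

definition L_smooth :: "('a::real_inner \<Rightarrow> real) \<Rightarrow> real \<Rightarrow> ('a \<Rightarrow> real) \<Rightarrow> ('a \<Rightarrow> 'a) \<Rightarrow> bool" where
  "L_smooth N L f g \<longleftrightarrow> (\<forall>x y. dual_norm N (g x - g y) \<le> L * N (x - y))"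

definition edom :: "('a \<Rightarrow> ereal) \<Rightarrow> 'a set" where
  "edom h = {x. h x < \<infinity>}"

definition closed_fun :: "('a::topological_space \<Rightarrow> ereal) \<Rightarrow> bool" where
  "closed_fun h \<longleftrightarrow> closed {(x, t::real). h x \<le> ereal t}"

definition proper_convex :: "('a::real_vector \<Rightarrow> ereal) \<Rightarrow> bool" where
  "proper_convex h \<longleftrightarrow> (\<forall>x. h x \<noteq> -\<infinity>) \<and> edom h \<noteq> {} \<and>
     convex (edom h) \<and> convex_on (edom h) (\<lambda>x. real_of_ereal (h x))"

text \<open>1-strong convexity of w with respect to N on the set D
  (w is assumed finite on D, so it is stated for the real values).\<close>
definition strongly_convex_on :: "('a::real_vector \<Rightarrow> real) \<Rightarrow> 'a set \<Rightarrow> ('a \<Rightarrow> ereal) \<Rightarrow> bool" where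
  "strongly_convex_on N D w \<longleftrightarrow> (\<forall>x\<in>D. \<forall>y\<in>D. \<forall>t\<in>{0..1}.
     w (t *\<^sub>R x + (1 - t) *\<^sub>R y) \<le>
       ereal (t * real_of_ereal (w x) + (1 - t) * real_of_ereal (w y) - t * (1 - t) / 2 * (N (x - y))\<^sup>2))"

definition lin :: "('a::real_inner \<Rightarrow> real) \<Rightarrow> ('a \<Rightarrow> 'a) \<Rightarrow> 'a \<Rightarrow> 'a \<Rightarrow> real" where
  "lin f g x0 x = f x0 + g x0 \<bullet> (x - x0)"

fun ACP :: "('a::real_inner \<Rightarrow> ereal) \<Rightarrow> ('a \<Rightarrow> real) \<Rightarrow> ('a \<Rightarrow> 'a) \<Rightarrow> 'a \<Rightarrow> (nat \<Rightarrow> 'a)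
     \<Rightarrow> (nat \<Rightarrow> real) \<Rightarrow> nat \<Rightarrow> 'a \<Rightarrow> ereal" where
  "ACP ha f g y0 p \<zeta> 0 x = ha x + ereal (lin f g y0 x)"
| "ACP ha f g y0 p \<zeta> (Suc j) x =
     ereal (1 - \<zeta> j) * ACP ha f g y0 p \<zeta> j x + ereal (\<zeta> j) * (ha x + ereal (lin f g (p j) x))"

end

theory Submission
  imports Defs
begin

text \<open>
  Write the model as \<Gamma>_k = h^\<alpha> + \<gamma>_k with \<gamma>_k affine of slope s_k. Then x_k minimizes \<Gamma>_k,
  and since h^\<alpha> is \<alpha>-strongly convex, \<Gamma>_k z \<ge> \<Gamma>_k x_k + \<alpha>/2 N(z - x_k)^2. It suffices to show
  that the gap \<phi>^\<alpha> y_k - \<Gamma>_k x_k shrinks by the factor 1 - \<lambda> in each step. Put T = x~_(k+1) and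
  u = y_(k+1) = (1 - \<lambda>) y_k + \<lambda> x_(k+1). The descent lemma and convexity of h^\<alpha> give
  \<phi>^\<alpha> u \<le> \<ell>_f(u;T) + L/2 N(u - T)^2 + \<lambda> h^\<alpha> x_(k+1) + (1 - \<lambda>) h^\<alpha> y_k.
  As u - T = \<lambda> (x_(k+1) - x_k) and \<lambda> is the root of L \<lambda>^2 = (1 - \<lambda>) \<alpha>, the error term is exactly
  (1 - \<lambda>) times the quadratic growth of \<Gamma>_k from x_k to x_(k+1). Together with \<ell>_f(y_k;T) \<le> f y_k
  (convexity of f) and \<Gamma>_(k+1) = (1 - \<lambda>) \<Gamma>_k + \<lambda> (h^\<alpha> + \<ell>_f(-;T)) this is the contraction.
\<close>

section \<open>Norms and dual norms\<close>

lemma is_norm_scaleR: "is_norm N \<Longrightarrow> N (c *\<^sub>R x) = \<bar>c\<bar> * N x"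
  by (simp add: is_norm_def)

lemma is_norm_triangle: "is_norm N \<Longrightarrow> N (x + y) \<le> N x + N y"
  by (simp add: is_norm_def)

lemma is_norm_eq_0_iff: "is_norm N \<Longrightarrow> N x = 0 \<longleftrightarrow> x = 0"
  by (simp add: is_norm_def)

lemma is_norm_zero: "is_norm N \<Longrightarrow> N 0 = 0"
  by (simp add: is_norm_def)

lemma is_norm_nonneg:
  assumes "is_norm N"
  shows "0 \<le> N x"
proof -
  have "N 0 \<le> N x + N (- x)"
    using is_norm_triangle[OF assms, of x "- x"] by simp
  moreover have "N (- x) = N x"
    using is_norm_scaleR[OF assms, of "-1" x] by simp
  ultimately show ?thesis
    using is_norm_zero[OF assms] by simp
qed

lemma is_norm_convex_on:
  assumes "is_norm N"
  shows "convex_on UNIV N"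
proof (rule convex_onI)
  fix t :: real and x y assume "0 < t" "t < 1"
  then show "N ((1 - t) *\<^sub>R x + t *\<^sub>R y) \<le> (1 - t) * N x + t * N y"
    using is_norm_triangle[OF assms, of "(1 - t) *\<^sub>R x" "t *\<^sub>R y"]
    by (simp add: is_norm_scaleR[OF assms])
qed simp

lemma is_norm_lower_bound:
  fixes N :: "'a::euclidean_space \<Rightarrow> real"
  assumes "is_norm N"
  obtains c where "c > 0" "\<And>x. c * norm x \<le> N x"
proof -
  have "continuous_on (sphere 0 1) N"
    using convex_on_continuous[OF open_UNIV is_norm_convex_on[OF assms]]
    by (rule continuous_on_subset) simp
  from continuous_attains_inf[OF compact_sphere _ this]
  obtain m where m: "m \<in> sphere 0 1" "\<And>y. y \<in> sphere 0 1 \<Longrightarrow> N m \<le> N y"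
    by auto
  have "N m * norm x \<le> N x" for x
  proof (cases "x = 0")
    case False
    then have "N m \<le> N ((1 / norm x) *\<^sub>R x)"
      by (intro m(2)) simp
    then show ?thesis
      using False by (simp add: is_norm_scaleR[OF assms] field_simps)
  qed (simp add: is_norm_nonneg[OF assms])
  moreover have "N m > 0"
    using m(1) is_norm_eq_0_iff[OF assms, of m] is_norm_nonneg[OF assms, of m] by auto
  ultimately show thesis
    using that by blast
qed

lemma inner_le_dual_norm:
  fixes N :: "'a::euclidean_space \<Rightarrow> real"
  assumes "is_norm N"
  shows "a \<bullet> v \<le> dual_norm N a * N v"
proof (cases "v = 0")
  case False
  obtain c where c: "c > 0" "\<And>x. c * norm x \<le> N x"
    using is_norm_lower_bound[OF assms] by blast
  \<comment> \<open>Without this, the supremum defining \<^const>\<open>dual_norm\<close> would be an unspecified value.\<close>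
  have "bdd_above {a \<bullet> x | x. N x \<le> 1}"
  proof (rule bdd_aboveI, safe)
    fix x assume "N x \<le> 1"
    then have "c * norm x \<le> 1"
      using c(2)[of x] by linarith
    then have "norm x \<le> 1 / c"
      using c(1) by (simp add: field_simps)
    have "a \<bullet> x \<le> norm a * norm x"
      by (rule norm_cauchy_schwarz)
    also have "\<dots> \<le> norm a * (1 / c)"
      using \<open>norm x \<le> 1 / c\<close> by (intro mult_left_mono) simp_all
    finally show "a \<bullet> x \<le> norm a * (1 / c)" .
  qed
  moreover have Nv: "N v > 0"
    using False is_norm_eq_0_iff[OF assms, of v] is_norm_nonneg[OF assms, of v] by auto
  ultimately have "a \<bullet> ((1 / N v) *\<^sub>R v) \<le> dual_norm N a"
    unfolding dual_norm_def
    by (intro cSup_upper) (auto simp: is_norm_scaleR[OF assms] intro!: exI[of _ "(1 / N v) *\<^sub>R v"])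
  then show ?thesis
    using Nv by (simp add: field_simps)
qed (simp add: is_norm_zero[OF assms])

section \<open>Convex and smooth functions\<close>

lemma has_real_derivative_along_line:
  assumes "\<And>z. (f has_derivative (\<lambda>v. g z \<bullet> v)) (at z)"
  shows "((\<lambda>t. f (x + t *\<^sub>R d)) has_real_derivative g (x + t *\<^sub>R d) \<bullet> d) (at t)"
proof -
  have "((\<lambda>t. x + t *\<^sub>R d) has_derivative (\<lambda>s. s *\<^sub>R d)) (at t)"
    by (auto intro!: derivative_eq_intros)
  from has_derivative_compose[OF this assms]
  have "((\<lambda>t. f (x + t *\<^sub>R d)) has_derivative (\<lambda>s. g (x + t *\<^sub>R d) \<bullet> (s *\<^sub>R d))) (at t)"
    by (simp add: o_def)
  moreover have "(\<lambda>s. g (x + t *\<^sub>R d) \<bullet> (s *\<^sub>R d)) = (*) (g (x + t *\<^sub>R d) \<bullet> d)"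
    by (simp add: fun_eq_iff mult.commute)
  ultimately show ?thesis
    by (simp add: has_field_derivative_def)
qed

lemma convex_on_gradient_inequality:
  fixes f :: "'a::real_inner \<Rightarrow> real"
  assumes f_conv: "convex_on UNIV f"
    and f_grad: "\<And>z. (f has_derivative (\<lambda>v. g z \<bullet> v)) (at z)"
  shows "f x + g x \<bullet> (y - x) \<le> f y"
proof -
  define \<phi> where "\<phi> = (\<lambda>t::real. f (x + t *\<^sub>R (y - x)))"
  have "convex_on UNIV \<phi>"
  proof (rule convex_onI)
    fix t a b :: real assume "0 < t" "t < 1"
    moreover have "x + ((1 - t) * a + t * b) *\<^sub>R (y - x)
        = (1 - t) *\<^sub>R (x + a *\<^sub>R (y - x)) + t *\<^sub>R (x + b *\<^sub>R (y - x))"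
      by (simp add: algebra_simps)
    ultimately show "\<phi> ((1 - t) *\<^sub>R a + t *\<^sub>R b) \<le> (1 - t) * \<phi> a + t * \<phi> b"
      using convex_onD[OF f_conv] by (simp add: \<phi>_def)
  qed simp
  moreover have "(\<phi> has_real_derivative g x \<bullet> (y - x)) (at 0 within UNIV)"
    using has_real_derivative_along_line[OF f_grad, of x "y - x" 0] by (simp add: \<phi>_def)
  ultimately have "\<phi> 1 - \<phi> 0 \<ge> g x \<bullet> (y - x) * (1 - 0)"
    by (intro convex_on_imp_above_tangent) auto
  then show ?thesis
    by (simp add: \<phi>_def)
qed

lemma L_smooth_descent:
  fixes N :: "'a::euclidean_space \<Rightarrow> real"
  assumes norm: "is_norm N" and f_smooth: "L_smooth N L f g"
    and f_grad: "\<And>z. (f has_derivative (\<lambda>v. g z \<bullet> v)) (at z)"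
  shows "f y \<le> f x + g x \<bullet> (y - x) + L / 2 * (N (y - x))\<^sup>2"
proof -
  define d where "d = y - x"
  define \<psi> where "\<psi> t = f (x + t *\<^sub>R d) - t * (g x \<bullet> d) - L * t\<^sup>2 / 2 * (N d)\<^sup>2" for t
  have \<psi>_deriv: "(\<psi> has_real_derivative (g (x + t *\<^sub>R d) - g x) \<bullet> d - L * t * (N d)\<^sup>2) (at t)" for t
    unfolding \<psi>_def inner_diff_left
    by (rule has_real_derivative_along_line[OF f_grad] derivative_eq_intros refl | simp)+
  have \<psi>_deriv_nonpos: "(g (x + t *\<^sub>R d) - g x) \<bullet> d - L * t * (N d)\<^sup>2 \<le> 0" if "0 \<le> t" for t
  proof -
    have "(g (x + t *\<^sub>R d) - g x) \<bullet> d \<le> dual_norm N (g (x + t *\<^sub>R d) - g x) * N d"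
      by (rule inner_le_dual_norm[OF norm])
    also have "\<dots> \<le> L * N (t *\<^sub>R d) * N d"
      using f_smooth is_norm_nonneg[OF norm] unfolding L_smooth_def
      by (metis add_diff_cancel_left' mult_right_mono)
    also have "\<dots> = L * t * (N d)\<^sup>2"
      using that by (simp add: is_norm_scaleR[OF norm] power2_eq_square)
    finally show ?thesis
      by simp
  qed
  have "\<psi> 1 \<le> \<psi> 0"
  proof (rule DERIV_nonpos_imp_nonincreasing[of 0 1])
    fix t :: real assume "0 \<le> t" "t \<le> 1"
    then show "\<exists>D. (\<psi> has_real_derivative D) (at t) \<and> D \<le> 0"
      using \<psi>_deriv \<psi>_deriv_nonpos by blast
  qed simp
  then show ?thesis
    by (simp add: \<psi>_def d_def)
qed

section \<open>Strong convexity\<close>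

definition strongly_convex_with :: "('a::real_vector \<Rightarrow> real) \<Rightarrow> real \<Rightarrow> 'a set \<Rightarrow> ('a \<Rightarrow> real) \<Rightarrow> bool"
  where "strongly_convex_with N \<mu> D \<phi> \<longleftrightarrow> (\<forall>a\<in>D. \<forall>b\<in>D. \<forall>t\<in>{0..1}.
     \<phi> (t *\<^sub>R a + (1 - t) *\<^sub>R b) \<le> t * \<phi> a + (1 - t) * \<phi> b - \<mu> * (t * (1 - t) / 2 * (N (a - b))\<^sup>2))"

lemma strongly_convex_withD:
  "strongly_convex_with N \<mu> D \<phi> \<Longrightarrow> a \<in> D \<Longrightarrow> b \<in> D \<Longrightarrow> 0 \<le> t \<Longrightarrow> t \<le> 1 \<Longrightarrow>
    \<phi> (t *\<^sub>R a + (1 - t) *\<^sub>R b) \<le> t * \<phi> a + (1 - t) * \<phi> b - \<mu> * (t * (1 - t) / 2 * (N (a - b))\<^sup>2)"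
  by (simp add: strongly_convex_with_def)

lemma strongly_convex_with_add_affine:
  assumes sc: "strongly_convex_with N \<mu> D \<phi>"
    and affine: "\<And>a b (t::real). \<psi> (t *\<^sub>R a + (1 - t) *\<^sub>R b) = t * \<psi> a + (1 - t) * \<psi> b"
  shows "strongly_convex_with N \<mu> D (\<lambda>z. \<phi> z + \<psi> z)"
  unfolding strongly_convex_with_def
proof (intro ballI)
  fix a b and t :: real
  assume "a \<in> D" "b \<in> D" "t \<in> {0..1}"
  with strongly_convex_withD[OF sc] affine[of t a b]
  show "\<phi> (t *\<^sub>R a + (1 - t) *\<^sub>R b) + \<psi> (t *\<^sub>R a + (1 - t) *\<^sub>R b)
      \<le> t * (\<phi> a + \<psi> a) + (1 - t) * (\<phi> b + \<psi> b) - \<mu> * (t * (1 - t) / 2 * (N (a - b))\<^sup>2)"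
    unfolding distrib_left by fastforce
qed

lemma strongly_convex_with_quadratic_growth:
  assumes sc: "strongly_convex_with N \<mu> D \<phi>" and "convex D"
    and x: "x \<in> D" "\<And>z. z \<in> D \<Longrightarrow> \<phi> x \<le> \<phi> z" and z: "z \<in> D"
  shows "\<phi> x + \<mu> / 2 * (N (z - x))\<^sup>2 \<le> \<phi> z"
proof -
  define Q where "Q = \<mu> / 2 * (N (z - x))\<^sup>2"
  have "(1 - t) * Q \<le> \<phi> z - \<phi> x" if t: "0 < t" "t < 1" for t
  proof -
    have "\<phi> x \<le> \<phi> (t *\<^sub>R z + (1 - t) *\<^sub>R x)"
      using t x z \<open>convex D\<close> by (intro x(2) convexD) auto
    also have "\<dots> \<le> t * \<phi> z + (1 - t) * \<phi> x - t * ((1 - t) * Q)"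
      using strongly_convex_withD[OF sc z x(1), of t] t by (simp add: Q_def mult_ac)
    finally have "t * ((1 - t) * Q) \<le> t * (\<phi> z - \<phi> x)"
      by (simp add: algebra_simps)
    then show ?thesis
      using t by simp
  qed
  moreover have "\<forall>\<^sub>F t in at_right (0::real). 0 < t \<and> t < 1"
    by (subst eventually_at_right[of 0 1]) (auto intro!: exI[of _ 1])
  ultimately have "\<forall>\<^sub>F t in at_right 0. (1 - t) * Q \<le> \<phi> z - \<phi> x"
    by (auto elim!: eventually_mono)
  moreover have "((\<lambda>t. (1 - t) * Q) \<longlongrightarrow> Q) (at_right 0)"
    by (auto intro!: tendsto_eq_intros)
  ultimately have "Q \<le> \<phi> z - \<phi> x"
    by (intro tendsto_upperbound) auto
  then show ?thesis
    by (simp add: Q_def)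
qed

section \<open>The regularized function h + \<alpha> w\<close>

lemma proper_convex_finite_on_edom:
  "proper_convex h \<Longrightarrow> z \<in> edom h \<Longrightarrow> h z = ereal (real_of_ereal (h z))"
  unfolding proper_convex_def edom_def by (cases "h z") auto

lemma bounded_nonneg_finite_on_edom:
  assumes "\<And>z. w z \<ge> 0" and "\<exists>M. \<forall>z\<in>edom h. w z \<le> ereal M" and "z \<in> edom h"
  shows "w z = ereal (real_of_ereal (w z))"
  using assms by (cases "w z") force+

lemma regularized_eq_if_edom:
  assumes "proper_convex h" "\<And>z. w z \<ge> 0" "\<exists>M. \<forall>z\<in>edom h. w z \<le> ereal M" "\<alpha> \<ge> 0"
  shows "h z + ereal \<alpha> * w z
    = (if z \<in> edom h then ereal (real_of_ereal (h z) + \<alpha> * real_of_ereal (w z)) else \<infinity>)"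
proof (cases "z \<in> edom h")
  case True
  then show ?thesis
    using proper_convex_finite_on_edom[OF assms(1) True] bounded_nonneg_finite_on_edom[OF assms(2,3) True]
    by (metis plus_ereal.simps(1) times_ereal.simps(1))
next
  case False
  then have "h z = \<infinity>"
    by (simp add: edom_def top.not_eq_extremum)
  moreover have "ereal \<alpha> * w z \<ge> 0"
    using assms(2,4) by simp
  ultimately show ?thesis
    using False by simp
qed

lemma regularized_strongly_convex:
  assumes h: "proper_convex h" and w_nonneg: "\<And>z. w z \<ge> 0"
    and w_bdd: "\<exists>M. \<forall>z\<in>edom h. w z \<le> ereal M"
    and w_sc: "strongly_convex_on N (edom h) w" and "\<alpha> \<ge> 0"
  shows "strongly_convex_with N \<alpha> (edom h) (\<lambda>z. real_of_ereal (h z) + \<alpha> * real_of_ereal (w z))"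
  unfolding strongly_convex_with_def
proof (intro ballI)
  fix a b and t :: real
  assume a: "a \<in> edom h" and b: "b \<in> edom h" and t: "t \<in> {0..1}"
  define p where "p = t *\<^sub>R a + (1 - t) *\<^sub>R b"
  have "p \<in> edom h"
    using h a b t unfolding proper_convex_def p_def by (auto intro: convexD)
  have h_conv: "real_of_ereal (h p) \<le> t * real_of_ereal (h a) + (1 - t) * real_of_ereal (h b)"
    using h a b t convex_onD[of "edom h" "\<lambda>z. real_of_ereal (h z)" "1 - t" a b]
    unfolding proper_convex_def p_def by (simp add: add.commute)
  have "w p \<le> ereal (t * real_of_ereal (w a) + (1 - t) * real_of_ereal (w b) - t * (1 - t) / 2 * (N (a - b))\<^sup>2)"
    using w_sc a b t unfolding strongly_convex_on_def p_def by blast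
  then have "real_of_ereal (w p)
      \<le> t * real_of_ereal (w a) + (1 - t) * real_of_ereal (w b) - t * (1 - t) / 2 * (N (a - b))\<^sup>2"
    by (subst (asm) bounded_nonneg_finite_on_edom[OF w_nonneg w_bdd \<open>p \<in> edom h\<close>]) simp
  from mult_left_mono[OF this \<open>\<alpha> \<ge> 0\<close>] h_conv
  show "real_of_ereal (h p) + \<alpha> * real_of_ereal (w p)
      \<le> t * (real_of_ereal (h a) + \<alpha> * real_of_ereal (w a)) + (1 - t) * (real_of_ereal (h b) + \<alpha> * real_of_ereal (w b))
        - \<alpha> * (t * (1 - t) / 2 * (N (a - b))\<^sup>2)"
    by (simp add: algebra_simps)
qed

section \<open>The ACP model\<close>

lemma lin_affine:
  "lin f g p (t *\<^sub>R a + (1 - t) *\<^sub>R b) = t * lin f g p a + (1 - t) * lin f g p b"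
  by (simp add: lin_def inner_add_right inner_diff_right algebra_simps)

fun ACP_lin :: "('a::real_inner \<Rightarrow> real) \<Rightarrow> ('a \<Rightarrow> 'a) \<Rightarrow> 'a \<Rightarrow> (nat \<Rightarrow> 'a)
     \<Rightarrow> (nat \<Rightarrow> real) \<Rightarrow> nat \<Rightarrow> 'a \<Rightarrow> real" where
  "ACP_lin f g y0 p \<zeta> 0 x = lin f g y0 x"
| "ACP_lin f g y0 p \<zeta> (Suc j) x = (1 - \<zeta> j) * ACP_lin f g y0 p \<zeta> j x + \<zeta> j * lin f g (p j) x"

lemma ACP_eq_add_ACP_lin:
  assumes "ha x \<noteq> -\<infinity>" and "\<And>j. 0 \<le> \<zeta> j \<and> \<zeta> j \<le> 1"
  shows "ACP ha f g y0 p \<zeta> k x = ha x + ereal (ACP_lin f g y0 p \<zeta> k x)"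
proof (induction k)
  case (Suc k)
  show ?case
  proof (cases "ha x")
    case PInf
    \<comment> \<open>In \<^typ>\<open>ereal\<close>, 0 * \<infinity> = 0, so the weight \<zeta> k = 1 needs its own case.\<close>
    then show ?thesis
      using Suc assms(2)[of k] by (cases "\<zeta> k = 1") (auto simp: ereal_mult_infty)
  qed (use Suc assms in \<open>auto simp: algebra_simps\<close>)
qed simp

lemma ACP_lin_eq_add_inner:
  assumes "s 0 = g y0" and "\<And>j. s (Suc j) = (1 - \<zeta> j) *\<^sub>R s j + \<zeta> j *\<^sub>R g (p j)"
  shows "ACP_lin f g y0 p \<zeta> k x = ACP_lin f g y0 p \<zeta> k 0 + s k \<bullet> x"
  by (induction k) (simp_all add: assms lin_def inner_diff_right inner_add_left algebra_simps)

lemma ACP_lin_affine: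
  "ACP_lin f g y0 p \<zeta> k (t *\<^sub>R a + (1 - t) *\<^sub>R b)
     = t * ACP_lin f g y0 p \<zeta> k a + (1 - t) * ACP_lin f g y0 p \<zeta> k b"
proof (induction k)
  case (Suc k)
  then show ?case
    by (simp add: lin_affine) (simp add: algebra_simps)
qed (simp add: lin_affine)

lemma ACP_lin_argmin:
  assumes ha: "\<And>z. ha z = (if z \<in> D then ereal (H z) else \<infinity>)" and "y \<in> D"
    and s0: "s 0 = g y0" and s_step: "\<And>j. s (Suc j) = (1 - \<zeta> j) *\<^sub>R s j + \<zeta> j *\<^sub>R g (p j)"
    and x_min: "\<And>z. ereal (s k \<bullet> x) + ha x \<le> ereal (s k \<bullet> z) + ha z"
  shows "x \<in> D" and "\<And>z. z \<in> D \<Longrightarrow> H x + ACP_lin f g y0 p \<zeta> k x \<le> H z + ACP_lin f g y0 p \<zeta> k z"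
proof -
  have slope: "ACP_lin f g y0 p \<zeta> k v = ACP_lin f g y0 p \<zeta> k 0 + s k \<bullet> v" for v
    by (rule ACP_lin_eq_add_inner) (fact s0 s_step)+
  show "x \<in> D"
    using x_min[of y] ha[of x] ha[of y] \<open>y \<in> D\<close> by (cases "x \<in> D") auto
  then show "H x + ACP_lin f g y0 p \<zeta> k x \<le> H z + ACP_lin f g y0 p \<zeta> k z" if "z \<in> D" for z
    using x_min[of z] ha[of x] ha[of z] that slope[of x] slope[of z] by simp
qed

lemma ACP_INF_ge_argmin:
  assumes ha: "\<And>z. ha z = (if z \<in> D then ereal (H z) else \<infinity>)"
    and \<zeta>: "\<And>j. 0 \<le> \<zeta> j \<and> \<zeta> j \<le> 1"
    and x_min: "\<And>z. z \<in> D \<Longrightarrow> H x + ACP_lin f g y0 p \<zeta> k x \<le> H z + ACP_lin f g y0 p \<zeta> k z"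
  shows "ereal (H x + ACP_lin f g y0 p \<zeta> k x) \<le> (INF z. ACP ha f g y0 p \<zeta> k z)"
proof (rule INF_greatest)
  fix z
  have "ACP ha f g y0 p \<zeta> k z = ha z + ereal (ACP_lin f g y0 p \<zeta> k z)"
    using ha[of z] \<zeta> by (intro ACP_eq_add_ACP_lin) auto
  then show "ereal (H x + ACP_lin f g y0 p \<zeta> k x) \<le> ACP ha f g y0 p \<zeta> k z"
    using ha[of z] x_min[of z] by (cases "z \<in> D") auto
qed

section \<open>The gap estimate for TAA\<close>

lemma TAA_step_size:
  fixes L \<alpha> :: real
  assumes "L > 0" "\<alpha> > 0" and lam: "lam = 2 * \<alpha> / (\<alpha> + sqrt (\<alpha>\<^sup>2 + 4 * L * \<alpha>))"
  shows "0 < lam" "lam < 1" "L * lam\<^sup>2 = (1 - lam) * \<alpha>"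
proof -
  define S where "S = sqrt (\<alpha>\<^sup>2 + 4 * L * \<alpha>)"
  have S2: "S\<^sup>2 = \<alpha>\<^sup>2 + 4 * L * \<alpha>"
    using assms by (simp add: S_def)
  have "\<alpha> < S"
    unfolding S_def using assms by (intro real_less_rsqrt) (simp add: power2_eq_square)
  then show "0 < lam" "lam < 1"
    using assms by (simp_all add: lam S_def[symmetric])
  have "lam * (\<alpha> + S) = 2 * \<alpha>"
    using \<open>\<alpha> < S\<close> assms by (simp add: lam S_def[symmetric])
  then have "lam * S = 2 * \<alpha> - lam * \<alpha>"
    by (simp add: algebra_simps)
  then have "(lam * S)\<^sup>2 = (2 * \<alpha> - lam * \<alpha>)\<^sup>2"
    by simp
  then have "lam\<^sup>2 * (\<alpha>\<^sup>2 + 4 * L * \<alpha>) = (2 * \<alpha> - lam * \<alpha>)\<^sup>2"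
    by (simp add: power_mult_distrib S2)
  then have "4 * \<alpha> * (L * lam\<^sup>2) = 4 * \<alpha> * ((1 - lam) * \<alpha>)"
    by algebra
  then show "L * lam\<^sup>2 = (1 - lam) * \<alpha>"
    using assms by simp
qed

lemma convex_averaged_iterates_in:
  assumes "convex D" "y 0 \<in> D" "\<And>k. x k \<in> D" "0 \<le> lam" "lam \<le> 1"
    and "\<And>k. y (Suc k) = (1 - lam) *\<^sub>R y k + lam *\<^sub>R x (Suc k)"
  shows "y k \<in> D"
  by (induction k) (use assms in \<open>auto intro: convexD\<close>)

text \<open>Here G plays the role of \<Gamma>_k, x and x' of x_k and x_(k+1), and y of y_k.\<close>

lemma TAA_gap_contraction:
  fixes N :: "'a::euclidean_space \<Rightarrow> real" and f :: "'a \<Rightarrow> real" and g :: "'a \<Rightarrow> 'a"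
    and lam :: real and x x' y :: 'a
  defines "T \<equiv> (1 - lam) *\<^sub>R y + lam *\<^sub>R x" and "u \<equiv> (1 - lam) *\<^sub>R y + lam *\<^sub>R x'"
  assumes norm: "is_norm N"
    and f_conv: "convex_on UNIV f"
    and f_grad: "\<And>z. (f has_derivative (\<lambda>v. g z \<bullet> v)) (at z)"
    and f_smooth: "L_smooth N L f g"
    and H_sc: "strongly_convex_with N \<alpha> D H" and "\<alpha> \<ge> 0"
    and lam: "0 < lam" "lam < 1" "L * lam\<^sup>2 = (1 - lam) * \<alpha>"
    and "y \<in> D" "x' \<in> D"
    and growth: "G x + \<alpha> / 2 * (N (x' - x))\<^sup>2 \<le> G x'"
  shows "f u + H u - ((1 - lam) * G x' + lam * (H x' + lin f g T x')) \<le> (1 - lam) * (f y + H y - G x)"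
proof -
  define r where "r = N (x' - x)"
  have u: "u = lam *\<^sub>R x' + (1 - lam) *\<^sub>R y"
    by (simp add: u_def)
  have smooth_step: "L / 2 * (N (u - T))\<^sup>2 = (1 - lam) * (\<alpha> / 2 * r\<^sup>2)"
  proof -
    have "u - T = lam *\<^sub>R (x' - x)"
      by (simp add: u_def T_def algebra_simps)
    then have "N (u - T) = lam * r"
      using lam by (simp add: r_def is_norm_scaleR[OF norm])
    then show ?thesis
      using lam(3) by (simp add: power_mult_distrib)
  qed
  have H_conv: "H u \<le> lam * H x' + (1 - lam) * H y"
  proof -
    have "H u \<le> lam * H x' + (1 - lam) * H y - \<alpha> * (lam * (1 - lam) / 2 * (N (x' - y))\<^sup>2)"
      unfolding u using lam by (intro strongly_convex_withD[OF H_sc \<open>x' \<in> D\<close> \<open>y \<in> D\<close>]) simp_all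
    moreover have "0 \<le> \<alpha> * (lam * (1 - lam) / 2 * (N (x' - y))\<^sup>2)"
      using lam \<open>\<alpha> \<ge> 0\<close> by simp
    ultimately show ?thesis
      by linarith
  qed
  have lin_u: "lin f g T u = lam * lin f g T x' + (1 - lam) * lin f g T y"
    unfolding u by (rule lin_affine)
  have "f u + H u \<le> lin f g T u + L / 2 * (N (u - T))\<^sup>2 + lam * H x' + (1 - lam) * H y"
    using L_smooth_descent[OF norm f_smooth f_grad, of u T] H_conv unfolding lin_def by linarith
  also have "\<dots> = lam * (H x' + lin f g T x') + (1 - lam) * (lin f g T y + H y + \<alpha> / 2 * r\<^sup>2)"
    unfolding smooth_step lin_u by (simp add: algebra_simps)
  also have "\<dots> \<le> lam * (H x' + lin f g T x') + (1 - lam) * (f y + H y - G x + G x')"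
  proof -
    have "lin f g T y + H y + \<alpha> / 2 * r\<^sup>2 \<le> f y + H y - G x + G x'"
      using convex_on_gradient_inequality[OF f_conv f_grad, of T y] growth
      unfolding lin_def r_def by linarith
    then show ?thesis
      using lam by (intro add_left_mono mult_left_mono) simp_all
  qed
  finally show ?thesis
    by (simp add: algebra_simps)
qed

lemma TAA_gap_bound:
  fixes N :: "'a::euclidean_space \<Rightarrow> real" and f :: "'a \<Rightarrow> real" and g :: "'a \<Rightarrow> 'a"
    and x y xt :: "nat \<Rightarrow> 'a" and lam :: real
  defines "\<gamma> \<equiv> ACP_lin f g (y 0) (\<lambda>i. xt (Suc i)) (\<lambda>_. lam)"
  assumes norm: "is_norm N"
    and f_conv: "convex_on UNIV f"
    and f_grad: "\<And>z. (f has_derivative (\<lambda>v. g z \<bullet> v)) (at z)"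
    and f_smooth: "L_smooth N L f g"
    and D: "convex D" and H_sc: "strongly_convex_with N \<alpha> D H" and "\<alpha> \<ge> 0"
    and lam: "0 < lam" "lam < 1" "L * lam\<^sup>2 = (1 - lam) * \<alpha>"
    and y0: "y 0 \<in> D" and xD: "\<And>k. x k \<in> D"
    and x_min: "\<And>k z. z \<in> D \<Longrightarrow> H (x k) + \<gamma> k (x k) \<le> H z + \<gamma> k z"
    and xt_step: "\<And>k. xt (Suc k) = (1 - lam) *\<^sub>R y k + lam *\<^sub>R x k"
    and y_step: "\<And>k. y (Suc k) = (1 - lam) *\<^sub>R y k + lam *\<^sub>R x (Suc k)"
  shows "f (y k) + H (y k) - (H (x k) + \<gamma> k (x k))
           \<le> (1 - lam) ^ k * (f (y 0) + H (y 0) - (H (x 0) + \<gamma> 0 (x 0)))"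
proof (induction k)
  case (Suc k)
  have "strongly_convex_with N \<alpha> D (\<lambda>z. H z + \<gamma> k z)"
    unfolding \<gamma>_def by (rule strongly_convex_with_add_affine[OF H_sc ACP_lin_affine])
  from strongly_convex_with_quadratic_growth[OF this D xD x_min xD]
  have "H (x k) + \<gamma> k (x k) + \<alpha> / 2 * (N (x (Suc k) - x k))\<^sup>2 \<le> H (x (Suc k)) + \<gamma> k (x (Suc k))"
    by simp
  note contraction = TAA_gap_contraction[where G = "\<lambda>z. H z + \<gamma> k z" and y = "y k",
      OF norm f_conv f_grad f_smooth H_sc \<open>\<alpha> \<ge> 0\<close> lam _ xD this]
  have "f (y (Suc k)) + H (y (Suc k)) - (H (x (Suc k)) + \<gamma> (Suc k) (x (Suc k)))
      \<le> (1 - lam) * (f (y k) + H (y k) - (H (x k) + \<gamma> k (x k)))"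
    using contraction[folded xt_step y_step] convex_averaged_iterates_in[OF D y0 xD _ _ y_step] lam
    by (simp add: \<gamma>_def algebra_simps)
  also have "\<dots> \<le> (1 - lam) ^ Suc k * (f (y 0) + H (y 0) - (H (x 0) + \<gamma> 0 (x 0)))"
    using Suc.IH lam by (simp add: mult_left_mono)
  finally show ?case .
qed simp

theorem propositionD1:
  fixes N :: "real^'n \<Rightarrow> real"
    and f :: "real^'n \<Rightarrow> real" and g :: "real^'n \<Rightarrow> real^'n"
    and h w :: "real^'n \<Rightarrow> ereal"
    and L \<alpha> lam :: real
    and x y xt s :: "nat \<Rightarrow> real^'n"
  assumes norm: "is_norm N"
    and f_conv: "convex_on UNIV f"
    and f_grad: "\<And>z. (f has_derivative (\<lambda>v. g z \<bullet> v)) (at z)"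
    and L_pos: "L > 0"
    and f_smooth: "L_smooth N L f g"
    and h_pc: "proper_convex h" and h_closed: "closed_fun h" and h_bdd: "bounded (edom h)"
    and w_nonneg: "\<And>z. w z \<ge> 0" and w_closed: "closed_fun w"
    and w_sc: "strongly_convex_on N (edom h) w"
    and w_max: "\<exists>M::real. \<forall>z\<in>edom h. w z \<le> ereal M"
    and \<alpha>_pos: "\<alpha> > 0"
    and lam_def: "lam = 2 * \<alpha> / (\<alpha> + sqrt (\<alpha>\<^sup>2 + 4 * L * \<alpha>))"
    and y0_dom: "y 0 \<in> edom h"
    and s0: "s 0 = g (y 0)"
    and x_min: "\<And>k z. ereal (s k \<bullet> x k) + (h (x k) + ereal \<alpha> * w (x k))
                        \<le> ereal (s k \<bullet> z) + (h z + ereal \<alpha> * w z)"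
    and xt_step: "\<And>k. xt (Suc k) = (1 - lam) *\<^sub>R y k + lam *\<^sub>R x k"
    and s_step: "\<And>k. s (Suc k) = (1 - lam) *\<^sub>R s k + lam *\<^sub>R g (xt (Suc k))"
    and y_step: "\<And>k. y (Suc k) = (1 - lam) *\<^sub>R y k + lam *\<^sub>R x (Suc k)"
  shows "\<forall>k. (INF z. ACP (\<lambda>z. h z + ereal \<alpha> * w z) f g (y 0) (\<lambda>i. xt (Suc i)) (\<lambda>_. lam) k z)
           \<ge> (ereal (f (y k)) + (h (y k) + ereal \<alpha> * w (y k)))
              - ereal ((1 - lam) ^ k) *
                ((ereal (f (y 0)) + (h (y 0) + ereal \<alpha> * w (y 0)))
                 - ACP (\<lambda>z. h z + ereal \<alpha> * w z) f g (y 0) (\<lambda>i. xt (Suc i)) (\<lambda>_. lam) 0 (x 0))"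
proof -
  \<comment> \<open>Closedness of h and w and boundedness of edom h only serve to guarantee that the
    minimizers x k exist; here they are given by x_min.\<close>
  define H where "H z = real_of_ereal (h z) + \<alpha> * real_of_ereal (w z)" for z
  define \<gamma> where "\<gamma> = ACP_lin f g (y 0) (\<lambda>i. xt (Suc i)) (\<lambda>_. lam)"
  note lam = TAA_step_size[OF L_pos \<alpha>_pos lam_def]
  have ha: "h z + ereal \<alpha> * w z = (if z \<in> edom h then ereal (H z) else \<infinity>)" for z
    using regularized_eq_if_edom[OF h_pc w_nonneg w_max] \<alpha>_pos by (simp add: H_def)
  note argmin = ACP_lin_argmin[where p = "\<lambda>i. xt (Suc i)" and \<zeta> = "\<lambda>_. lam", OF ha y0_dom s0 s_step]
  have x_dom: "x j \<in> edom h" for j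
    by (rule argmin(1)[OF x_min[of j]])
  have \<gamma>_min: "H (x j) + \<gamma> j (x j) \<le> H z + \<gamma> j z" if "z \<in> edom h" for j z
    unfolding \<gamma>_def by (rule argmin(2)[OF x_min[of j] that])
  have D_conv: "convex (edom h)"
    using h_pc by (simp add: proper_convex_def)
  have H_sc: "strongly_convex_with N \<alpha> (edom h) H"
    unfolding H_def using regularized_strongly_convex[OF h_pc w_nonneg w_max w_sc] \<alpha>_pos by simp
  have gap: "f (y k) + H (y k) - (H (x k) + \<gamma> k (x k))
      \<le> (1 - lam) ^ k * (f (y 0) + H (y 0) - (H (x 0) + \<gamma> 0 (x 0)))" for k
    unfolding \<gamma>_def using \<alpha>_pos
    by (intro TAA_gap_bound[OF norm f_conv f_grad f_smooth D_conv H_sc _ lam y0_dom x_dom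
          \<gamma>_min[unfolded \<gamma>_def] xt_step y_step]) simp
  have min_model: "ereal (H (x k) + \<gamma> k (x k))
      \<le> (INF z. ACP (\<lambda>z. h z + ereal \<alpha> * w z) f g (y 0) (\<lambda>i. xt (Suc i)) (\<lambda>_. lam) k z)" for k
    unfolding \<gamma>_def by (rule ACP_INF_ge_argmin[OF ha]) (use lam \<gamma>_min in \<open>simp_all add: \<gamma>_def\<close>)
  have "ereal (f (y k) + H (y k) - (1 - lam) ^ k * (f (y 0) + H (y 0) - (H (x 0) + \<gamma> 0 (x 0))))
      \<le> (INF z. ACP (\<lambda>z. h z + ereal \<alpha> * w z) f g (y 0) (\<lambda>i. xt (Suc i)) (\<lambda>_. lam) k z)" for k
    using gap[of k] by (intro order_trans[OF _ min_model]) simp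
  moreover have "y k \<in> edom h" for k
    using convex_averaged_iterates_in[OF D_conv y0_dom x_dom _ _ y_step] lam by simp
  ultimately show ?thesis
    by (simp add: ha y0_dom x_dom \<gamma>_def lin_def)
qed

end
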